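(* For all $N\in\mathbb{Z}$, $a\in\mathcal{A}(\mathbb{C}\mathrm{P}^\ell_q)$ and $\omega\in\Omega^k_N$, $$\bar\partial(a\omega)=a(\bar\partial\omega)+(\bar\partial a)\wedge_q\omega.$$
   Context: $0<q<1$, $\ell\ge2$. $U_q(\mathfrak{su}(\ell+1))$: Drinfeld–Jimbo Hopf $*$-algebra with generators $K_i^{\pm1},E_i,F_i=E_i^*$ ($1\le i\le\ell$), $\Delta(E_i)=E_i\otimes K_i+K_i^{-1}\otimes E_i$, $S(E_i)=-qE_i$, $S(K_i)=K_i^{-1}$, enlarged by the grouplike $\hat K=(K_1K_2^2\cdots K_\ell^\ell)^{2/(\ell+1)}$; $\mathcal{K}$ = Hopf subalgebra generated by $K_i^{\pm1},E_i,F_i$ ($i\le\ell-1$) and $\hat K^{\pm1}$. $M_{ii}=E_i$, $M_{jk}=[E_j,M_{j+1,k}]_q$ with $[a,b]_q=ab-q^{-1}ba$, $N_{i\ell}=(K_i\cdots K_\ell)\hat K^{-1}$, $X_i=N_{i\ell}M_{i\ell}^*$. $\mathcal{A}(SU_q(\ell+1))$: quantum coordinate algebra generated by matrix coefficients of the fundamental representation $\pi$ ($\pi^j_k(K_i)=\delta^j_kq^{\frac12(\delta_{i+1,j}-\delta_{i,j})}$, $\pi^j_k(E_i)=\delta^j_{i+1}\delta^i_k$), right action $a\triangleleft h=\langle h,a_{(1)}\rangle a_{(2)}$, $\mathcal{L}_ha=a\triangleleft S^{-1}(h)$. $\mathcal{A}(\mathbb{C}\mathrm{P}^\ell_q)=\{a:\mathcal{L}_ha=\epsilon(h)a\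 \forall h\in\mathcal{K}\}$. $W_k=\mathbb{C}^{\Lambda_k}$ ($\Lambda_k$ = increasing $k$-tuples in $\{1..\ell\}$) with representation $\sigma_k$: $(\sigma_k(K_j)w)_{\underline i}=q^{\frac12 j\#\underline i}w_{\underline i}$, $(\sigma_k(E_j)w)_{\underline i}=\delta_{j\#\underline i,1}w_{\underline i^{j,+}}$, $(\sigma_k(F_j)w)_{\underline i}=\delta_{j\#\underline i,-1}w_{\underline i^{j,-}}$ ($j\#\underline i=\sum_h(\delta_{i_h,j}-\delta_{i_h,j+1})$; $\underline i^{j,\pm}$ replace $j$ by $j+1$, resp. $j+1$ by $j$), $\sigma_0=\sigma_\ell=\epsilon$, $\sigma^N_k(\hat K)=q^{k-\frac{\ell}{\ell+1}N}$. $\Omega^k_N=\{\omega\in\mathcal{A}(SU_q(\ell+1))\otimes W_k:(\mathcal{L}_{h_{(1)}}\otimes\sigma^N_k(h_{(2)}))\omega=\epsilon(h)\omega\ \forall h\in\mathcal{K}\}$; $a\omega$ is componentwise left multiplication. $(\bar\partial\omega)_{\underline i}=\sum_{r=1}^{k+1}(-q)^{1-r}\omega_{\underline i\setminus i_r}\triangleleft S^{-1}(\hat KX_{i_r})$ ($\underline i\in\Lambda_{k+1}$); in particular $\bar\partial a=(a\triangleleft S^{-1}(\hat KX_i))_{i=1}^\ell$. For a $1$-form $\eta$ and $\omega\in\Omega^k_N$: $(\eta\wedge_q\omega)_{\underline i}=\sum_{r=1}^{k+1}(-q)^{1-r}\eta_{i_r}\omega_{\underline i\setminus i_r}$ for $\underline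 i\in\Lambda_{k+1}$ (zero if $k=\ell$). *)

theory Defs
  imports Complex_Main
begin

text \<open>Elements of the algebra are represented by (noncommutative) linear
combinations of words in the generators, i.e. lists of (coefficient, word).
All functionals below are matrix coefficients of representations of
U_q(su(l+1)), so they factor through the defining relations.\<close>

datatype gen = Kp nat | Km nat | Eg nat | Fg nat | Kh | Khm
  (* Kp i = K_i, Km i = K_i^{-1}, Eg i = E_i, Fg i = F_i, Kh = Khat, Khm = Khat^{-1} *)

type_synonym word = "gen list"
type_synonym uelem = "(complex \<times> word) list"
type_synonym functional = "word \<Rightarrow> complex"

definition umul :: "uelem \<Rightarrow> uelem \<Rightarrow> uelem" where
  "umul x y = [(c * d, u @ v). (c, u) \<leftarrow> x, (d, v) \<leftarrow> y]"

definition uscale :: "complex \<Rightarrow> uelem \<Rightarrow> uelem" where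
  "uscale a x = [(a * c, u). (c, u) \<leftarrow> x]"

definition ugen :: "gen \<Rightarrow> uelem" where
  "ugen g = [(1, [g])]"

definition qcomm :: "real \<Rightarrow> uelem \<Rightarrow> uelem \<Rightarrow> uelem" where
  "qcomm q a b = umul a b @ uscale (- inverse (complex_of_real q)) (umul b a)"

fun star_gen :: "gen \<Rightarrow> gen" where
  "star_gen (Eg i) = Fg i"
| "star_gen (Fg i) = Eg i"
| "star_gen g = g"

definition ustar :: "uelem \<Rightarrow> uelem" where
  "ustar x = [(cnj c, rev (map star_gen w)). (c, w) \<leftarrow> x]"

text \<open>inverse antipode on generators: S(E)=-qE, S(F)=-q^{-1}F, S(K)=K^{-1}\<close>
fun sinv_gen :: "real \<Rightarrow> gen \<Rightarrow> complex \<times> gen" where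
  "sinv_gen q (Eg i) = (- inverse (complex_of_real q), Eg i)"
| "sinv_gen q (Fg i) = (- complex_of_real q, Fg i)"
| "sinv_gen q (Kp i) = (1, Km i)"
| "sinv_gen q (Km i) = (1, Kp i)"
| "sinv_gen q Kh = (1, Khm)"
| "sinv_gen q Khm = (1, Kh)"

fun sinv_word :: "real \<Rightarrow> word \<Rightarrow> complex \<times> word" where
  "sinv_word q [] = (1, [])"
| "sinv_word q (g # w) =
     (let (c, w') = sinv_word q w; (d, g') = sinv_gen q g in (c * d, w' @ [g']))"

definition usinv :: "real \<Rightarrow> uelem \<Rightarrow> uelem" where
  "usinv q x = [(c * fst (sinv_word q w), snd (sinv_word q w)). (c, w) \<leftarrow> x]"

fun coprod_gen :: "gen \<Rightarrow> (word \<times> word) list" where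
  "coprod_gen (Eg i) = [([Eg i], [Kp i]), ([Km i], [Eg i])]"
| "coprod_gen (Fg i) = [([Fg i], [Kp i]), ([Km i], [Fg i])]"
| "coprod_gen g = [([g], [g])]"

fun coprod :: "word \<Rightarrow> (word \<times> word) list" where
  "coprod [] = [([], [])]"
| "coprod (g # w) = [(a @ u, b @ v). (a, b) \<leftarrow> coprod_gen g, (u, v) \<leftarrow> coprod w]"

fun eps_gen :: "gen \<Rightarrow> complex" where
  "eps_gen (Eg i) = 0"
| "eps_gen (Fg i) = 0"
| "eps_gen g = 1"

definition eps :: functional where
  "eps w = prod_list (map eps_gen w)"

definition ev :: "functional \<Rightarrow> uelem \<Rightarrow> complex" where
  "ev f x = (\<Sum>(c, w) \<leftarrow> x. c * f w)"

section \<open>Quantum coordinate algebra A(SU_q(l+1)) as functionals\<close>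

text \<open>fundamental representation pi, indices 1..l+1\<close>
definition khat_exp :: "nat \<Rightarrow> nat \<Rightarrow> real" where
  "khat_exp l j = (\<Sum>i = 1..l. real i *
      (((if j = i + 1 then 1 else 0) - (if j = i then 1 else 0)) / 2))"

fun pi_gen :: "real \<Rightarrow> nat \<Rightarrow> gen \<Rightarrow> nat \<Rightarrow> nat \<Rightarrow> complex" where
  "pi_gen q l (Kp i) j k = (if j = k then complex_of_real
      (q powr (((if j = i + 1 then 1 else 0) - (if j = i then 1 else 0)) / 2)) else 0)"
| "pi_gen q l (Km i) j k = (if j = k then complex_of_real
      (q powr (- (((if j = i + 1 then 1 else 0) - (if j = i then 1 else 0)) / 2))) else 0)"
| "pi_gen q l (Eg i) j k = (if j = i + 1 \<and> k = i then 1 else 0)"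
| "pi_gen q l (Fg i) j k = (if j = i \<and> k = i + 1 then 1 else 0)"
| "pi_gen q l Kh j k = (if j = k then complex_of_real
      (q powr (2 / (real l + 1) * khat_exp l j)) else 0)"
| "pi_gen q l Khm j k = (if j = k then complex_of_real
      (q powr (- (2 / (real l + 1) * khat_exp l j))) else 0)"

fun pi_word :: "real \<Rightarrow> nat \<Rightarrow> word \<Rightarrow> nat \<Rightarrow> nat \<Rightarrow> complex" where
  "pi_word q l [] j k = (if j = k then 1 else 0)"
| "pi_word q l (g # w) j k = (\<Sum>m = 1..l + 1. pi_gen q l g j m * pi_word q l w m k)"

text \<open>convolution product (dual to the coproduct)\<close>
definition conv :: "functional \<Rightarrow> functional \<Rightarrow> functional" where
  "conv f g w = (\<Sum>(u, v) \<leftarrow> coprod w. f u * g v)"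

inductive_set Aq :: "real \<Rightarrow> nat \<Rightarrow> functional set" for q l where
  unit: "eps \<in> Aq q l"
| coeff: "j \<in> {1..l + 1} \<Longrightarrow> k \<in> {1..l + 1} \<Longrightarrow> (\<lambda>w. pi_word q l w j k) \<in> Aq q l"
| add: "f \<in> Aq q l \<Longrightarrow> g \<in> Aq q l \<Longrightarrow> (\<lambda>w. f w + g w) \<in> Aq q l"
| smult: "f \<in> Aq q l \<Longrightarrow> (\<lambda>w. c * f w) \<in> Aq q l"
| mult: "f \<in> Aq q l \<Longrightarrow> g \<in> Aq q l \<Longrightarrow> conv f g \<in> Aq q l"

text \<open>right action a \<triangleleft> h = <h,a_(1)> a_(2), i.e. (a \<triangleleft> h)(x) = a(hx)\<close>
definition ract :: "functional \<Rightarrow> uelem \<Rightarrow> functional" where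
  "ract f h = (\<lambda>w. (\<Sum>(c, u) \<leftarrow> h. c * f (u @ w)))"

definition Lact :: "real \<Rightarrow> uelem \<Rightarrow> functional \<Rightarrow> functional" where
  "Lact q h f = ract f (usinv q h)"

fun isK :: "nat \<Rightarrow> gen \<Rightarrow> bool" where
  "isK l (Kp i) = (1 \<le> i \<and> i \<le> l - 1)"
| "isK l (Km i) = (1 \<le> i \<and> i \<le> l - 1)"
| "isK l (Eg i) = (1 \<le> i \<and> i \<le> l - 1)"
| "isK l (Fg i) = (1 \<le> i \<and> i \<le> l - 1)"
| "isK l Kh = True"
| "isK l Khm = True"

definition Kalg :: "nat \<Rightarrow> uelem set" where
  "Kalg l = {h. \<forall>(c, w) \<in> set h. \<forall>g \<in> set w. isK l g}"

definition CP :: "real \<Rightarrow> nat \<Rightarrow> functional set" where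
  "CP q l = {a \<in> Aq q l. \<forall>h \<in> Kalg l. Lact q h a = (\<lambda>w. ev eps h * a w)}"

text \<open>increasing k-tuples in {1..l}, represented by their underlying sets\<close>
definition Lam :: "nat \<Rightarrow> nat \<Rightarrow> nat set set" where
  "Lam l k = {I. I \<subseteq> {1..l} \<and> card I = k}"

definition jsharp :: "nat \<Rightarrow> nat set \<Rightarrow> int" where
  "jsharp j I = (if j \<in> I then 1 else 0) - (if Suc j \<in> I then 1 else 0)"

fun sigma_gen :: "real \<Rightarrow> nat \<Rightarrow> int \<Rightarrow> nat \<Rightarrow> gen \<Rightarrow> nat set \<Rightarrow> nat set \<Rightarrow> complex" where
  "sigma_gen q l N k (Kp j) I J = (if I = J then complex_of_real (q powr (real_of_int (jsharp j I) / 2)) else 0)"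
| "sigma_gen q l N k (Km j) I J = (if I = J then complex_of_real (q powr (- (real_of_int (jsharp j I) / 2))) else 0)"
| "sigma_gen q l N k (Eg j) I J = (if jsharp j I = 1 \<and> J = insert (Suc j) (I - {j}) then 1 else 0)"
| "sigma_gen q l N k (Fg j) I J = (if jsharp j I = -1 \<and> J = insert j (I - {Suc j}) then 1 else 0)"
| "sigma_gen q l N k Kh I J = (if I = J then complex_of_real
      (q powr (real k - real l * real_of_int N / (real l + 1))) else 0)"
| "sigma_gen q l N k Khm I J = (if I = J then complex_of_real
      (q powr (- (real k - real l * real_of_int N / (real l + 1)))) else 0)"

fun sigma_word :: "real \<Rightarrow> nat \<Rightarrow> int \<Rightarrow> nat \<Rightarrow> word \<Rightarrow> nat set \<Rightarrow> nat set \<Rightarrow> complex" where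
  "sigma_word q l N k [] I J = (if I = J then 1 else 0)"
| "sigma_word q l N k (g # w) I J = (\<Sum>M \<in> Lam l k. sigma_gen q l N k g I M * sigma_word q l N k w M J)"

text \<open>elements of A \<otimes> W_k are functions from index sets to A, vanishing off Lam l k\<close>
definition Omega :: "real \<Rightarrow> nat \<Rightarrow> int \<Rightarrow> nat \<Rightarrow> (nat set \<Rightarrow> functional) set" where
  "Omega q l N k = {\<omega>. (\<forall>I \<in> Lam l k. \<omega> I \<in> Aq q l) \<and> (\<forall>I. I \<notin> Lam l k \<longrightarrow> \<omega> I = (\<lambda>w. 0)) \<and>
     (\<forall>h \<in> Kalg l. \<forall>I \<in> Lam l k.
        (\<lambda>x. (\<Sum>(c, w) \<leftarrow> h. c * (\<Sum>(u, v) \<leftarrow> coprod w.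
            (\<Sum>J \<in> Lam l k. sigma_word q l N k v I J * Lact q [(1, u)] (\<omega> J) x))))
        = (\<lambda>x. ev eps h * \<omega> I x))}"

fun Mfrom :: "real \<Rightarrow> nat \<Rightarrow> nat \<Rightarrow> uelem" where
  "Mfrom q 0 j = ugen (Eg j)"
| "Mfrom q (Suc n) j = qcomm q (ugen (Eg j)) (Mfrom q n (Suc j))"

definition Mil :: "real \<Rightarrow> nat \<Rightarrow> nat \<Rightarrow> uelem" where
  "Mil q l i = Mfrom q (l - i) i"

definition Nop :: "nat \<Rightarrow> nat \<Rightarrow> uelem" where
  "Nop l i = [(1, map Kp [i..<l + 1] @ [Khm])]"

definition Xop :: "real \<Rightarrow> nat \<Rightarrow> nat \<Rightarrow> uelem" where
  "Xop q l i = umul (Nop l i) (ustar (Mil q l i))"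

definition qsign :: "real \<Rightarrow> nat set \<Rightarrow> nat \<Rightarrow> complex" where
  "qsign q I x = (- complex_of_real q) powi (1 - int (card {y \<in> I. y \<le> x}))"

definition dbar :: "real \<Rightarrow> nat \<Rightarrow> (nat set \<Rightarrow> functional) \<Rightarrow> nat set \<Rightarrow> functional" where
  "dbar q l \<omega> I = (\<lambda>w. \<Sum>x \<in> I. qsign q I x *
      ract (\<omega> (I - {x})) (usinv q (umul (ugen Kh) (Xop q l x))) w)"

definition dbar0 :: "real \<Rightarrow> nat \<Rightarrow> functional \<Rightarrow> nat \<Rightarrow> functional" where
  "dbar0 q l a i = ract a (usinv q (umul (ugen Kh) (Xop q l i)))"

definition qwedge :: "real \<Rightarrow> (nat \<Rightarrow> functional) \<Rightarrow> (nat set \<Rightarrow> functional) \<Rightarrow> nat set \<Rightarrow> functional" where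
  "qwedge q \<eta> \<omega> I = (\<lambda>w. \<Sum>x \<in> I. qsign q I x * conv (\<eta> x) (\<omega> (I - {x})) w)"

end

theory Submission
  imports Defs
begin

text \<open>
  With \<open>Y\<^sub>x = S\<^sup>-\<^sup>1(K\<^sup>^ X\<^sub>x)\<close>, the claim reduces, term by term
  in the alternating sums defining \<open>dbar\<close> and \<open>qwedge\<close>, to the derivation rule
  \<open>(ab) \<triangleleft> Y\<^sub>x = a (b \<triangleleft> Y\<^sub>x) + (a \<triangleleft> Y\<^sub>x) b\<close> for \<open>a \<in> \<A>(\<C>P\<^sup>l\<^sub>q)\<close> and arbitrary \<open>b\<close>.

  Since \<open>S\<^sup>-\<^sup>1 \<circ> *\<close> is multiplicative, \<open>S\<^sup>-\<^sup>1(M\<^sub>j\<^sub>l\<^sup>*)\<close> is built from \<open>F\<^sub>j, \<dots>, F\<^sub>l\<close> along the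
  recursion \<open>M\<^sub>j\<^sub>l = [E\<^sub>j, M\<^sub>j\<^sub>+\<^sub>1\<^sub>,\<^sub>l]\<^sub>q\<close>. Using \<open>\<Delta>(F\<^sub>i) = F\<^sub>i \<otimes> K\<^sub>i + K\<^sub>i\<^sup>-\<^sup>1 \<otimes> F\<^sub>i\<close>, induction along
  this recursion gives the twisted rule
  \<open>(ab) \<triangleleft> S\<^sup>-\<^sup>1(M\<^sub>j\<^sub>l\<^sup>*) = a (b \<triangleleft> S\<^sup>-\<^sup>1(M\<^sub>j\<^sub>l\<^sup>*)) + (a \<triangleleft> S\<^sup>-\<^sup>1(M\<^sub>j\<^sub>l\<^sup>*)) (b \<triangleleft> K\<^sub>j \<cdots> K\<^sub>l)\<close>:
  the \<open>F\<^sub>j\<close> falling on \<open>a\<close> vanish and the \<open>K\<^sub>j\<^sup>-\<^sup>1\<close> are absorbed by \<open>\<K>\<close>-invariance of \<open>a\<close>,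
  while the two remaining cross terms cancel because commuting a Cartan letter past an \<open>F\<close>
  costs an explicit power of \<open>q\<close> in \<open>\<A>(SU\<^sub>q(l+1))\<close>. The twist \<open>K\<^sub>j \<cdots> K\<^sub>l\<close> cancels against
  \<open>S\<^sup>-\<^sup>1(N\<^sub>x\<^sub>l)\<close>, as functionals in \<open>\<A>(SU\<^sub>q(l+1))\<close> see a word of Cartan letters only through its weight.

  The argument also needs invariance of \<open>a\<close> under \<open>K\<^sub>l\<^sup>\<plusminus>\<^sup>1\<close>, which are not in \<open>\<K>\<close>: the power
  \<open>K\<^sub>l\<^bsup>2l\<^esup>\<close> has the same weight as an element of \<open>\<K>\<close>, and \<open>a\<close> is a sum of eigenvectors of \<open>K\<^sub>l\<close>
  with positive eigenvalues, so all eigenvalues occurring in \<open>a\<close> equal 1.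
\<close>

declare sum.cl_ivl_Suc[simp del]

lemma sum_list_swap:
  "(\<Sum>x\<leftarrow>xs. \<Sum>y\<leftarrow>ys. F x y) = (\<Sum>y\<leftarrow>ys. \<Sum>x\<leftarrow>xs. (F x y :: 'a::comm_monoid_add))"
  by (induction xs) (simp_all add: sum_list_addf)

lemma sum_list_sum_swap:
  "(\<Sum>p\<leftarrow>xs. \<Sum>x\<in>S. G x p) = (\<Sum>x\<in>S. \<Sum>p\<leftarrow>xs. (G x p :: 'a::comm_monoid_add))"
  by (induction xs) (simp_all add: sum.distrib)

lemma sum_list_concat_map: "sum_list (concat (map f xs)) = (\<Sum>x\<leftarrow>xs. sum_list (f x))"
  by (induction xs) simp_all

lemma sum_list_append_pairs:
  "(\<Sum>(x, y) \<leftarrow> [(a @ u, b @ v). (a, b) \<leftarrow> A, (u, v) \<leftarrow> B]. \<phi> x y)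
   = (\<Sum>(a, b) \<leftarrow> A. \<Sum>(u, v) \<leftarrow> B. \<phi> (a @ u) (b @ v))"
  by (simp add: map_concat sum_list_concat_map case_prod_unfold o_def)

lemma sum_coprod_append:
  "(\<Sum>(x, y) \<leftarrow> coprod (u @ v). \<phi> x y)
   = (\<Sum>(a, b) \<leftarrow> coprod u. \<Sum>(c, d) \<leftarrow> coprod v. \<phi> (a @ c) (b @ d))"
  by (induction u arbitrary: \<phi>) (simp_all add: sum_list_append_pairs)

definition ract_word :: "functional \<Rightarrow> word \<Rightarrow> functional" where
  "ract_word f u = (\<lambda>w. f (u @ w))"

lemma ract_word_Nil [simp]: "ract_word f [] = f"
  by (simp add: ract_word_def)

lemma ract_word_append: "ract_word f (u @ v) = ract_word (ract_word f u) v"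
  by (simp add: ract_word_def)

lemma ract_single: "ract f [(c, u)] = (\<lambda>w. c * ract_word f u w)"
  by (simp add: ract_def ract_word_def)

lemma ract_append: "ract f (x @ y) = (\<lambda>w. ract f x w + ract f y w)"
  by (simp add: ract_def)

lemma ract_zero: "ract (\<lambda>w. 0) h = (\<lambda>w. 0)"
  by (simp add: ract_def case_prod_unfold)

lemma ract_uminus: "ract (\<lambda>w. - f w) h = (\<lambda>w. - ract f h w)"
  by (simp add: ract_def case_prod_unfold uminus_sum_list_map o_def)

lemma ract_scale: "ract (\<lambda>w. c * f w) h = (\<lambda>w. c * ract f h w)"
  by (simp add: ract_def case_prod_unfold sum_list_const_mult algebra_simps)

lemma ract_word_conv:
  "ract_word (conv f g) u = (\<lambda>w. \<Sum>(a, b) \<leftarrow> coprod u. conv (ract_word f a) (ract_word g b) w)"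
  by (simp add: ract_word_def conv_def sum_coprod_append)

lemma conv_zero_left: "conv (\<lambda>w. 0) g w = 0"
  by (simp add: conv_def case_prod_unfold)

lemma conv_add_right: "conv f (\<lambda>w. g w + h w) w = conv f g w + conv f h w"
  by (simp add: conv_def case_prod_unfold sum_list_addf algebra_simps)

lemma conv_uminus_left: "conv (\<lambda>w. - f w) g w = - conv f g w"
  by (simp add: conv_def case_prod_unfold uminus_sum_list_map o_def)

lemma conv_uminus_right: "conv f (\<lambda>w. - g w) w = - conv f g w"
  by (simp add: conv_def case_prod_unfold uminus_sum_list_map o_def)

lemma conv_scale_left: "conv (\<lambda>w. c * f w) g w = c * conv f g w"
  by (simp add: conv_def case_prod_unfold sum_list_const_mult mult.assoc)

lemma conv_scale_right: "conv f (\<lambda>w. c * g w) w = c * conv f g w"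
  by (simp add: conv_def case_prod_unfold sum_list_const_mult algebra_simps)

lemma conv_sum_right: "conv f (\<lambda>w. \<Sum>x\<in>S. F x w) w = (\<Sum>x\<in>S. conv f (F x) w)"
  by (simp add: conv_def case_prod_unfold sum_distrib_left sum_list_sum_swap)

lemma conv_sum_list_left: "conv (\<lambda>w. \<Sum>x\<leftarrow>xs. F x w) g w = (\<Sum>x\<leftarrow>xs. conv (F x) g w)"
  by (induction xs) (simp_all add: conv_def case_prod_unfold sum_list_addf distrib_right)

lemma conv_sum_list_right: "conv f (\<lambda>w. \<Sum>x\<leftarrow>xs. F x w) w = (\<Sum>x\<leftarrow>xs. conv f (F x) w)"
  by (induction xs) (simp_all add: conv_def case_prod_unfold sum_list_addf distrib_left)

lemma Aq_zero: "(\<lambda>w. 0) \<in> Aq q l"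
  using Aq.smult[OF Aq.unit, where c = 0] by simp

lemma Aq_sum_list:
  "(\<And>x. x \<in> set xs \<Longrightarrow> F x \<in> Aq q l) \<Longrightarrow> (\<lambda>w. \<Sum>x\<leftarrow>xs. F x w) \<in> Aq q l"
  by (induction xs) (simp_all add: Aq_zero Aq.add)

lemma Aq_sum:
  "finite S \<Longrightarrow> (\<And>x. x \<in> S \<Longrightarrow> F x \<in> Aq q l) \<Longrightarrow> (\<lambda>w. \<Sum>x\<in>S. F x w) \<in> Aq q l"
  by (induction S rule: finite_induct) (simp_all add: Aq_zero Aq.add)

lemma Aq_ract_letter: "f \<in> Aq q l \<Longrightarrow> ract_word f [g] \<in> Aq q l"
proof (induction f arbitrary: g rule: Aq.induct)
  case unit
  have "ract_word eps [g] = (\<lambda>w. eps_gen g * eps w)"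
    by (simp add: ract_word_def eps_def)
  then show ?case using Aq.smult[OF Aq.unit] by simp
next
  case (coeff j k)
  have "(\<lambda>w. \<Sum>m = 1..l + 1. pi_gen q l g j m * pi_word q l w m k) \<in> Aq q l"
    by (rule Aq_sum) (use coeff in \<open>auto intro!: Aq.smult Aq.coeff\<close>)
  then show ?case by (simp add: ract_word_def)
next
  case (add f f')
  then show ?case using Aq.add by (fastforce simp: ract_word_def)
next
  case (smult f c)
  then show ?case using Aq.smult by (fastforce simp: ract_word_def)
next
  case (mult f f')
  have "(\<lambda>w. \<Sum>p \<leftarrow> coprod [g]. (\<lambda>(a, b). conv (ract_word f a) (ract_word f' b)) p w) \<in> Aq q l"
    by (rule Aq_sum_list) (cases g; auto intro!: Aq.mult mult)
  then show ?case by (simp add: ract_word_conv case_prod_unfold)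
qed

lemma Aq_ract_word: "f \<in> Aq q l \<Longrightarrow> ract_word f u \<in> Aq q l"
  by (induction u arbitrary: f rule: rev_induct) (simp_all add: ract_word_append Aq_ract_letter)

section \<open>Cartan letters and weights\<close>

fun cartan :: "gen \<Rightarrow> bool" where
  "cartan (Eg i) = False"
| "cartan (Fg i) = False"
| "cartan _ = True"

lemma coprod_gen_cartan: "cartan g \<Longrightarrow> coprod_gen g = [([g], [g])]"
  by (cases g) auto

lemma coprod_cartan: "list_all cartan w \<Longrightarrow> coprod w = [(w, w)]"
  by (induction w) (auto simp: coprod_gen_cartan)

lemma conv_Cons_cartan:
  "cartan g \<Longrightarrow> conv f f' (g # w) = conv (\<lambda>v. f (g # v)) (\<lambda>v. f' (g # v)) w"
  using fun_cong[OF ract_word_conv[of f f' "[g]"], of w] by (simp add: ract_word_def coprod_gen_cartan)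

lemma conv_Fg:
  "conv f g (Fg j # w)
   = conv (\<lambda>v. f (Fg j # v)) (\<lambda>v. g (Kp j # v)) w + conv (\<lambda>v. f (Km j # v)) (\<lambda>v. g (Fg j # v)) w"
  using fun_cong[OF ract_word_conv[of f g "[Fg j]"], of w] by (simp add: ract_word_def)

lemma eps_append: "eps (u @ v) = eps u * eps v"
  by (simp add: eps_def)

lemma eps_cartan: "list_all cartan w \<Longrightarrow> eps w = 1"
  by (induction w) (auto simp: eps_def elim: cartan.elims)

text \<open>A Cartan letter acts diagonally in the fundamental representation:
  \<open>\<pi>(g) e\<^sub>j = q\<^bsup>cartan_exp l g j\<^esup> e\<^sub>j\<close>.\<close>

fun cartan_exp :: "nat \<Rightarrow> gen \<Rightarrow> nat \<Rightarrow> real" where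
  "cartan_exp l (Kp i) j = ((if j = i + 1 then 1 else 0) - (if j = i then 1 else 0)) / 2"
| "cartan_exp l (Km i) j = - (((if j = i + 1 then 1 else 0) - (if j = i then 1 else 0)) / 2)"
| "cartan_exp l Kh j = 2 / (real l + 1) * khat_exp l j"
| "cartan_exp l Khm j = - (2 / (real l + 1) * khat_exp l j)"
| "cartan_exp l (Eg i) j = 0"
| "cartan_exp l (Fg i) j = 0"

definition word_exp :: "nat \<Rightarrow> word \<Rightarrow> nat \<Rightarrow> real" where
  "word_exp l w j = (\<Sum>g\<leftarrow>w. cartan_exp l g j)"

lemma word_exp_Nil [simp]: "word_exp l [] j = 0"
  and word_exp_Cons [simp]: "word_exp l (g # w) j = cartan_exp l g j + word_exp l w j"
  and word_exp_append [simp]: "word_exp l (u @ w) j = word_exp l u j + word_exp l w j"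
  by (simp_all add: word_exp_def)

definition root_exp :: "nat \<Rightarrow> gen \<Rightarrow> nat \<Rightarrow> real" where
  "root_exp l g p = cartan_exp l g p - cartan_exp l g (p + 1)"

lemma sum_delta_mult:
  "finite S \<Longrightarrow> j \<in> S \<Longrightarrow> (\<Sum>m\<in>S. (if j = m then c m else 0) * f m) = c j * (f j :: 'a::comm_semiring_1)"
  by (simp add: if_distrib[of "\<lambda>x. x * _"] sum.delta cong: if_cong)

lemma pi_gen_cartan:
  "cartan g \<Longrightarrow> pi_gen q l g j m = (if j = m then complex_of_real (q powr cartan_exp l g j) else 0)"
  by (cases g) auto

lemma pi_word_append:
  "j \<in> {1..l+1} \<Longrightarrow> pi_word q l (u @ v) j k = (\<Sum>m = 1..l + 1. pi_word q l u j m * pi_word q l v m k)"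
proof (induction u arbitrary: j)
  case Nil
  then show ?case by (simp add: sum_delta_mult)
next
  case (Cons g u)
  have "pi_word q l ((g # u) @ v) j k
      = (\<Sum>m' = 1..l + 1. pi_gen q l g j m' * (\<Sum>m = 1..l + 1. pi_word q l u m' m * pi_word q l v m k))"
    using Cons.IH by simp
  also have "\<dots> = (\<Sum>m = 1..l + 1. (\<Sum>m' = 1..l + 1. pi_gen q l g j m' * pi_word q l u m' m) * pi_word q l v m k)"
    by (simp only: sum_distrib_left sum_distrib_right mult.assoc, rule sum.swap)
  finally show ?case by simp
qed

lemma pi_word_Cons_cartan:
  "cartan g \<Longrightarrow> j \<in> {1..l+1} \<Longrightarrow>
   pi_word q l (g # w) j k = complex_of_real (q powr cartan_exp l g j) * pi_word q l w j k"
  by (simp add: pi_gen_cartan sum_delta_mult)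

lemma pi_word_cartan:
  "0 < q \<Longrightarrow> list_all cartan w \<Longrightarrow> j \<in> {1..l+1} \<Longrightarrow>
   pi_word q l w j k = (if j = k then complex_of_real (q powr word_exp l w j) else 0)"
  by (induction w) (simp_all add: pi_word_Cons_cartan powr_add del: pi_word.simps(2))

lemma pi_word_cartan_infix:
  assumes "0 < q" and "list_all cartan w" and "j \<in> {1..l+1}"
  shows "pi_word q l (u @ w @ v) j k
       = (\<Sum>m = 1..l + 1. pi_word q l u j m * (complex_of_real (q powr word_exp l w m) * pi_word q l v m k))"
proof -
  have "pi_word q l (w @ v) m k = complex_of_real (q powr word_exp l w m) * pi_word q l v m k"
    if "m \<in> {1..l+1}" for m
    using that assms by (simp add: pi_word_append pi_word_cartan sum_delta_mult)
  then show ?thesis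
    using assms(3) by (simp add: pi_word_append[of j] del: pi_word.simps(2))
qed

lemma pi_word_Fg:
  "1 \<le> p \<Longrightarrow> p \<le> l \<Longrightarrow> pi_word q l (Fg p # v) m k = (if m = p then pi_word q l v (p + 1) k else 0)"
  using sum_delta_mult[of "{1..l+1}" "p + 1" "\<lambda>_. if m = p then 1 else 0" "\<lambda>m'. pi_word q l v m' k"]
  by (auto simp: eq_commute[of "p + 1"] if_distrib[of "\<lambda>x. x * _"] cong: if_cong)

lemma conv_infix:
  "conv f g (u @ x @ v) = (\<Sum>(a, b) \<leftarrow> coprod u. \<Sum>(c, d) \<leftarrow> coprod x. \<Sum>(e, h) \<leftarrow> coprod v.
      f (a @ c @ e) * g (b @ d @ h))"
  by (simp add: conv_def sum_coprod_append)

lemma Aq_cartan_weight_invariant: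
  assumes "0 < q" and "f \<in> Aq q l" and "list_all cartan w1" and "list_all cartan w2"
    and "\<And>j. j \<in> {1..l+1} \<Longrightarrow> word_exp l w1 j = word_exp l w2 j"
  shows "f (u @ w1 @ v) = f (u @ w2 @ v)"
  using assms(2)
proof (induction f arbitrary: u v rule: Aq.induct)
  case unit
  then show ?case by (simp add: eps_append eps_cartan assms(3,4))
next
  case (coeff j k)
  then show ?case by (simp add: pi_word_cartan_infix assms del: pi_word.simps(2))
next
  case (mult f g)
  then show ?case by (simp add: conv_infix coprod_cartan assms(3,4))
qed simp_all

lemma Aq_cartan_swap:
  "0 < q \<Longrightarrow> f \<in> Aq q l \<Longrightarrow> cartan g \<Longrightarrow> cartan h \<Longrightarrow> f (u @ g # h # v) = f (u @ h # g # v)"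
  using Aq_cartan_weight_invariant[of q f l "[g, h]" "[h, g]" u v] by simp

lemma Aq_cartan_F_qcommute:
  assumes q: "0 < q" and "f \<in> Aq q l" and g: "cartan g" and p: "1 \<le> p" "p \<le> l"
  shows "f (u @ g # Fg p # v) = complex_of_real (q powr root_exp l g p) * f (u @ Fg p # g # v)"
  using assms(2)
proof (induction f arbitrary: u v rule: Aq.induct)
  case unit
  then show ?case by (simp add: eps_append eps_def)
next
  case (coeff j k)
  have "pi_word q l (g # Fg p # v) m k
      = complex_of_real (q powr root_exp l g p) * pi_word q l (Fg p # g # v) m k"
    if "m \<in> {1..l+1}" for m
    using that g p q by (simp add: pi_word_Cons_cartan pi_word_Fg root_exp_def powr_diff del: pi_word.simps(2))
  then have "(\<Sum>m = 1..l + 1. pi_word q l u j m * pi_word q l (g # Fg p # v) m k)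
      = (\<Sum>m = 1..l + 1. pi_word q l u j m *
          (complex_of_real (q powr root_exp l g p) * pi_word q l (Fg p # g # v) m k))"
    by (intro sum.cong) simp_all
  then show ?case
    using coeff by (simp add: pi_word_append sum_distrib_left ac_simps del: pi_word.simps(2))
next
  case (mult f f')
  have coprods: "coprod [g, Fg p] = [([g, Fg p], [g, Kp p]), ([g, Km p], [g, Fg p])]"
    "coprod [Fg p, g] = [([Fg p, g], [Kp p, g]), ([Km p, g], [Fg p, g])]"
    using g by (simp_all add: coprod_gen_cartan)
  have "f (a @ g # Km p # e) = f (a @ Km p # g # e)"
    and "f' (b @ g # Kp p # h) = f' (b @ Kp p # g # h)" for a b e h
    using Aq_cartan_swap[OF q] mult.hyps g by simp_all
  then show ?case
    using conv_infix[of f f' u "[g, Fg p]" v] conv_infix[of f f' u "[Fg p, g]" v]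
    unfolding coprods
    by (simp add: mult.IH case_prod_unfold distrib_left sum_list_addf ac_simps flip: sum_list_const_mult)
qed (simp_all add: distrib_left)

section \<open>Invariance under \<open>K\<^sub>l\<close>\<close>

definition positive_eigensum :: "gen \<Rightarrow> functional \<Rightarrow> bool" where
  "positive_eigensum g f \<longleftrightarrow> (\<exists>cs. f = (\<lambda>w. \<Sum>(x, c)\<leftarrow>cs. c w) \<and>
      (\<forall>(x, c)\<in>set cs. 0 < x \<and> (\<forall>w. c (g # w) = complex_of_real x * c w)))"

lemma positive_eigensum_add:
  assumes "positive_eigensum g f" and "positive_eigensum g f'"
  shows "positive_eigensum g (\<lambda>w. f w + f' w)"
proof -
  obtain cs where "f = (\<lambda>w. \<Sum>(x, c)\<leftarrow>cs. c w)"
    and "\<forall>(x, c)\<in>set cs. 0 < x \<and> (\<forall>w. c (g # w) = complex_of_real x * c w)"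
    using assms(1) unfolding positive_eigensum_def by auto
  moreover obtain cs' where "f' = (\<lambda>w. \<Sum>(x, c)\<leftarrow>cs'. c w)"
    and "\<forall>(x, c)\<in>set cs'. 0 < x \<and> (\<forall>w. c (g # w) = complex_of_real x * c w)"
    using assms(2) unfolding positive_eigensum_def by auto
  ultimately show ?thesis
    unfolding positive_eigensum_def by (intro exI[of _ "cs @ cs'"]) auto
qed

lemma positive_eigensum_scale:
  assumes "positive_eigensum g f"
  shows "positive_eigensum g (\<lambda>w. a * f w)"
proof -
  obtain cs where "f = (\<lambda>w. \<Sum>(x, c)\<leftarrow>cs. c w)"
    and "\<forall>(x, c)\<in>set cs. 0 < x \<and> (\<forall>w. c (g # w) = complex_of_real x * c w)"
    using assms unfolding positive_eigensum_def by auto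
  then show ?thesis
    unfolding positive_eigensum_def
    by (intro exI[of _ "[(x, \<lambda>w. a * c w). (x, c) \<leftarrow> cs]"])
      (auto simp: case_prod_unfold o_def sum_list_const_mult)
qed

lemma positive_eigensum_conv:
  assumes "cartan g" and "positive_eigensum g f" and "positive_eigensum g f'"
  shows "positive_eigensum g (conv f f')"
proof -
  obtain cs where f: "f = (\<lambda>w. \<Sum>(x, c)\<leftarrow>cs. c w)"
    and eig: "\<forall>(x, c)\<in>set cs. 0 < x \<and> (\<forall>w. c (g # w) = complex_of_real x * c w)"
    using assms(2) unfolding positive_eigensum_def by auto
  obtain cs' where f': "f' = (\<lambda>w. \<Sum>(x, c)\<leftarrow>cs'. c w)"
    and eig': "\<forall>(x, c)\<in>set cs'. 0 < x \<and> (\<forall>w. c (g # w) = complex_of_real x * c w)"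
    using assms(3) unfolding positive_eigensum_def by auto
  have "conv c c' (g # w) = complex_of_real (x * x') * conv c c' w"
    if "(x, c) \<in> set cs" "(x', c') \<in> set cs'" for x c x' c' w
  proof -
    have "(\<lambda>w. c (g # w)) = (\<lambda>w. complex_of_real x * c w)"
      and "(\<lambda>w. c' (g # w)) = (\<lambda>w. complex_of_real x' * c' w)"
      using eig eig' that by auto
    then show ?thesis
      using assms(1) by (simp add: conv_Cons_cartan conv_scale_left conv_scale_right)
  qed
  moreover have "conv f f' w = (\<Sum>(x, c)\<leftarrow>cs. \<Sum>(x', c')\<leftarrow>cs'. conv c c' w)" for w
    unfolding f f' by (simp add: conv_sum_list_left conv_sum_list_right case_prod_unfold)
  ultimately show ?thesis
    unfolding positive_eigensum_def using eig eig'
    by (intro exI[of _ "[(x * x', conv c c'). (x, c) \<leftarrow> cs, (x', c') \<leftarrow> cs']"])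
      (auto simp: case_prod_unfold o_def map_concat sum_list_concat_map fun_eq_iff)
qed

lemma Aq_positive_eigensum:
  assumes "0 < q" and "cartan g" and "f \<in> Aq q l"
  shows "positive_eigensum g f"
  using assms(3)
proof (induction f rule: Aq.induct)
  case unit
  then show ?case
    unfolding positive_eigensum_def using assms(2)
    by (intro exI[of _ "[(1, eps)]"]) (auto simp: eps_def elim: cartan.elims)
next
  case (coeff j k)
  then show ?case
    unfolding positive_eigensum_def using assms
    by (intro exI[of _ "[(q powr cartan_exp l g j, \<lambda>w. pi_word q l w j k)]"])
      (simp add: pi_word_Cons_cartan del: pi_word.simps(2))
qed (simp_all add: positive_eigensum_add positive_eigensum_scale positive_eigensum_conv assms(2))

lemma eigenvectors_independent:
  assumes "finite S"
    and "\<And>x w. x \<in> S \<Longrightarrow> c x (g # w) = complex_of_real x * c x w"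
    and "\<And>w. (\<Sum>x\<in>S. c x w) = 0"
  shows "\<forall>x\<in>S. \<forall>w. c x w = 0"
  using assms
proof (induction S arbitrary: c rule: finite_induct)
  case empty
  then show ?case by simp
next
  case (insert m S)
  define c' where "c' x w = (complex_of_real x - complex_of_real m) * c x w" for x w
  have sum0: "c m w + (\<Sum>x\<in>S. c x w) = 0" for w
    using insert.prems(2)[of w] insert.hyps by simp
  have "(\<Sum>x\<in>S. c' x w) = 0" for w
  proof -
    have "(\<Sum>x\<in>S. c' x w)
        = (c m (g # w) + (\<Sum>x\<in>S. c x (g # w))) - complex_of_real m * (c m w + (\<Sum>x\<in>S. c x w))"
      by (simp add: c'_def insert.prems(1) algebra_simps sum_subtractf sum_distrib_left)
    also have "\<dots> = 0"
      by (simp only: sum0 mult_zero_right diff_zero)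
    finally show ?thesis .
  qed
  then have "\<forall>x\<in>S. \<forall>w. c' x w = 0"
    by (intro insert.IH) (simp_all add: c'_def insert.prems(1))
  then have zero: "\<forall>x\<in>S. \<forall>w. c x w = 0"
    using insert.hyps(2) by (auto simp: c'_def)
  then show ?case
    using sum0 by simp
qed

lemma positive_eigensum_distinct:
  assumes "positive_eigensum g f"
  obtains S C where "finite S" and "\<And>x. x \<in> S \<Longrightarrow> 0 < x" and "\<And>w. f w = (\<Sum>x\<in>S. C x w)"
    and "\<And>x w. C x (g # w) = complex_of_real x * C x w"
proof -
  obtain cs where f: "f = (\<lambda>w. \<Sum>(x, c)\<leftarrow>cs. c w)"
    and eig: "\<forall>(x, c)\<in>set cs. 0 < x \<and> (\<forall>w. c (g # w) = complex_of_real x * c w)"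
    using assms unfolding positive_eigensum_def by auto
  define S where "S = fst ` set cs"
  define C where "C x w = (\<Sum>(y, c)\<leftarrow>cs. if y = x then c w else 0)" for x w
  have "f w = (\<Sum>x\<in>S. C x w)" for w
  proof -
    have "(\<Sum>x\<in>S. C x w) = (\<Sum>(y, c)\<leftarrow>cs. \<Sum>x\<in>S. if y = x then c w else 0)"
      by (simp add: C_def case_prod_unfold sum_list_sum_swap)
    also have "\<dots> = f w"
      unfolding f S_def
      by (auto simp: case_prod_unfold sum.delta' rev_image_eqI intro!: arg_cong[of _ _ sum_list] map_cong)
    finally show ?thesis ..
  qed
  moreover have "C x (g # w) = complex_of_real x * C x w" for x w
  proof -
    have "C x (g # w) = (\<Sum>(y, c)\<leftarrow>cs. complex_of_real x * (if y = x then c w else 0))"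
      unfolding C_def using eig by (auto intro!: arg_cong[of _ _ sum_list] map_cong)
    then show ?thesis
      by (simp add: C_def case_prod_unfold sum_list_const_mult)
  qed
  moreover have "finite S" "\<And>x. x \<in> S \<Longrightarrow> 0 < x"
    using eig by (auto simp: S_def)
  ultimately show ?thesis
    using that by blast
qed

lemma positive_eigensum_periodic_fixed:
  assumes "positive_eigensum g f" and "0 < n" and "\<And>w. f (replicate n g @ w) = f w"
  shows "f (g # w) = f w"
proof -
  obtain S C where S: "finite S" "\<And>x. x \<in> S \<Longrightarrow> 0 < x" and f: "\<And>w. f w = (\<Sum>x\<in>S. C x w)"
    and eig: "\<And>x w. C x (g # w) = complex_of_real x * C x w"
    using positive_eigensum_distinct[OF assms(1)] by blast
  have powC: "C x (replicate k g @ w) = complex_of_real x ^ k * C x w" for x k w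
    by (induction k) (simp_all add: eig)
  have "\<forall>x\<in>S. \<forall>w. (complex_of_real x ^ n - 1) * C x w = 0"
  proof (rule eigenvectors_independent[where g = g])
    show "(\<Sum>x\<in>S. (complex_of_real x ^ n - 1) * C x w) = 0" for w
      using assms(3)[of w] by (simp add: f powC algebra_simps sum_subtractf)
  qed (simp_all add: S eig)
  moreover have "complex_of_real x ^ n \<noteq> 1" if "x \<in> S" "x \<noteq> 1" for x
  proof -
    have "x ^ n \<noteq> 1 ^ n"
      using S(2)[OF that(1)] that(2) assms(2) by (subst power_eq_iff_eq_base) auto
    then show ?thesis
      by (metis of_real_eq_1_iff of_real_power power_one)
  qed
  ultimately have C0: "C x w = 0" if "x \<in> S" "x \<noteq> 1" for x w
    using that by fastforce
  have "f (g # w) = (\<Sum>x\<in>S. complex_of_real x * C x w)"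
    by (simp add: f eig)
  also have "\<dots> = f w"
    unfolding f using C0 by (intro sum.cong) auto
  finally show ?thesis .
qed

lemma CP_K_letter:
  assumes "a \<in> CP q l" and "isK l g"
  shows "fst (sinv_gen q g) * a (snd (sinv_gen q g) # w) = eps_gen g * a w"
proof -
  have "[(1, [g])] \<in> Kalg l"
    using assms(2) by (simp add: Kalg_def)
  then have "Lact q [(1, [g])] a w = ev eps [(1, [g])] * a w"
    using assms(1) unfolding CP_def by auto
  then show ?thesis
    by (simp add: Lact_def ract_def usinv_def ev_def eps_def case_prod_unfold Let_def)
qed

lemma CP_Aq: "a \<in> CP q l \<Longrightarrow> a \<in> Aq q l"
  by (simp add: CP_def)

lemma CP_Fg_zero: "0 < q \<Longrightarrow> a \<in> CP q l \<Longrightarrow> 1 \<le> i \<Longrightarrow> i < l \<Longrightarrow> a (Fg i # w) = 0"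
  using CP_K_letter[of a q l "Fg i" w] by simp

lemma CP_K_cartan_fixed:
  assumes "a \<in> CP q l" and "cartan g" and "isK l g"
  shows "a (g # w) = a w"
proof (cases g)
  case (Kp i)
  then show ?thesis using CP_K_letter[OF assms(1), of "Km i" w] assms(3) by simp
next
  case (Km i)
  then show ?thesis using CP_K_letter[OF assms(1), of "Kp i" w] assms(3) by simp
next
  case Kh
  then show ?thesis using CP_K_letter[OF assms(1), of Khm w] by simp
next
  case Khm
  then show ?thesis using CP_K_letter[OF assms(1), of Kh w] by simp
qed (use assms(2) in auto)

lemma fixed_letters_append: "(\<And>g w. g \<in> set u \<Longrightarrow> a (g # w) = a w) \<Longrightarrow> a (u @ w) = a w"
  by (induction u) auto

text \<open>A word in the Cartan generators of \<open>\<K>\<close> with the same weight as \<open>K\<^sub>l\<^bsup>2l\<^esup>\<close>,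
  namely \<open>K\<^sup>^\<^bsup>l+1\<^esup> \<Prod>\<^sub>i\<^sub><\<^sub>l K\<^sub>i\<^bsup>-2i\<^esup>\<close>.\<close>

definition Kl_power_word :: "nat \<Rightarrow> word" where
  "Kl_power_word l = replicate (l + 1) Kh @ concat (map (\<lambda>i. replicate (2 * i) (Km i)) [1..<l])"

lemma word_exp_replicate: "word_exp l (replicate n g) j = real n * cartan_exp l g j"
  by (simp add: word_exp_def sum_list_replicate)

lemma word_exp_concat: "word_exp l (concat ws) j = (\<Sum>w\<leftarrow>ws. word_exp l w j)"
  by (induction ws) auto

lemma word_exp_Kl_power_word:
  assumes "1 \<le> l"
  shows "word_exp l (Kl_power_word l) j = word_exp l (replicate (2 * l) (Kp l)) j"
proof -
  define D where "D i = ((if j = i + 1 then 1 else 0) - (if j = i then 1 else 0) :: real)" for i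
  define T where "T = (\<Sum>i\<in>{1..<l}. real i * (D i / 2))"
  have "{1..l} = insert l {1..<l}"
    using assms by auto
  then have "khat_exp l j = T + real l * (D l / 2)"
    unfolding khat_exp_def T_def D_def by (simp add: add.commute)
  moreover have "word_exp l (concat (map (\<lambda>i. replicate (2 * i) (Km i)) [1..<l])) j = - 2 * T"
    unfolding word_exp_concat T_def
    by (simp add: word_exp_replicate D_def o_def sum_distrib_left sum.distinct_set_conv_list[symmetric]
        flip: sum_negf)
  moreover have "word_exp l (replicate (l + 1) Kh) j = 2 * khat_exp l j"
    unfolding word_exp_replicate by (simp add: field_simps)
  moreover have "cartan_exp l (Kp l) j = D l / 2"
    by (simp add: D_def)
  ultimately show ?thesis
    unfolding Kl_power_word_def word_exp_append
    by (simp add: word_exp_replicate algebra_simps del: cartan_exp.simps(1) replicate.simps)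
qed

lemma CP_Kp_last:
  assumes q: "0 < q" and l: "1 \<le> l" and a: "a \<in> CP q l"
  shows "a (Kp l # w) = a w"
proof (rule positive_eigensum_periodic_fixed)
  show "positive_eigensum (Kp l) a"
    using Aq_positive_eigensum[OF q _ CP_Aq[OF a]] by simp
  show "0 < 2 * l"
    using l by simp
  show "a (replicate (2 * l) (Kp l) @ w) = a w" for w
  proof -
    have "a ([] @ replicate (2 * l) (Kp l) @ w) = a ([] @ Kl_power_word l @ w)"
      using word_exp_Kl_power_word[OF l]
      by (intro Aq_cartan_weight_invariant[OF q CP_Aq[OF a]]) (auto simp: list_all_iff Kl_power_word_def)
    also have "\<dots> = a (Kl_power_word l @ w)"
      by simp
    also have "\<dots> = a w"
      by (rule fixed_letters_append, rule CP_K_cartan_fixed[OF a]) (auto simp: Kl_power_word_def)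
    finally show ?thesis by simp
  qed
qed

lemma CP_Km_last:
  assumes q: "0 < q" and l: "1 \<le> l" and a: "a \<in> CP q l"
  shows "a (Km l # w) = a w"
proof -
  have "a (Km l # w) = a ([] @ [Kp l, Km l] @ w)"
    using CP_Kp_last[OF assms] by simp
  also have "\<dots> = a ([] @ [] @ w)"
    by (rule Aq_cartan_weight_invariant[OF q CP_Aq[OF a]]) auto
  finally show ?thesis by simp
qed

lemma CP_cartan_fixed:
  assumes "0 < q" and "1 \<le> l" and "a \<in> CP q l"
    and "cartan g" and "isK l g \<or> g = Kp l \<or> g = Km l"
  shows "a (g # w) = a w"
  using assms CP_K_cartan_fixed CP_Kp_last CP_Km_last by blast

section \<open>The elements \<open>S\<^sup>-\<^sup>1(M\<^sup>*)\<close>\<close>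

lemma sum_umul: "(\<Sum>(c, w)\<leftarrow>umul x y. F c w) = (\<Sum>(c, u)\<leftarrow>x. \<Sum>(d, v)\<leftarrow>y. F (c * d) (u @ v))"
  by (simp add: umul_def map_concat sum_list_concat_map case_prod_unfold o_def)

lemma ract_umul: "ract f (umul x y) = ract (ract f x) y"
proof
  fix w
  have "ract f (umul x y) w = (\<Sum>(c, u)\<leftarrow>x. \<Sum>(d, v)\<leftarrow>y. c * d * f (u @ v @ w))"
    unfolding ract_def by (simp add: sum_umul)
  also have "\<dots> = ract (ract f x) y w"
    unfolding ract_def
    by (simp add: case_prod_unfold sum_list_swap[where xs = x] algebra_simps flip: sum_list_const_mult)
  finally show "ract f (umul x y) w = ract (ract f x) y w" .
qed

lemma ract_uscale: "ract f (uscale c x) = (\<lambda>w. c * ract f x w)"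
  by (simp add: ract_def uscale_def case_prod_unfold sum_list_const_mult o_def mult.assoc)

lemma sinv_word_append:
  "sinv_word q (u @ v) = (fst (sinv_word q u) * fst (sinv_word q v), snd (sinv_word q v) @ snd (sinv_word q u))"
  by (induction u) (auto simp: case_prod_unfold Let_def)

definition sinv_star :: "real \<Rightarrow> uelem \<Rightarrow> uelem" where
  "sinv_star q x = usinv q (ustar x)"

lemma sinv_star_append: "sinv_star q (x @ y) = sinv_star q x @ sinv_star q y"
  by (simp add: sinv_star_def usinv_def ustar_def)

lemma sinv_star_uscale: "sinv_star q (uscale c x) = uscale (cnj c) (sinv_star q x)"
  by (simp add: sinv_star_def usinv_def ustar_def uscale_def case_prod_unfold o_def)

text \<open>Both \<open>*\<close> and \<open>S\<^sup>-\<^sup>1\<close> reverse products, so their composite is multiplicative.\<close>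

lemma sinv_star_umul: "sinv_star q (umul x y) = umul (sinv_star q x) (sinv_star q y)"
  by (simp add: sinv_star_def usinv_def ustar_def umul_def sinv_word_append rev_map
      map_concat case_prod_unfold o_def mult_ac)

definition Mstar :: "real \<Rightarrow> nat \<Rightarrow> nat \<Rightarrow> uelem" where
  "Mstar q n j = sinv_star q (Mfrom q n j)"

lemma sinv_star_Eg: "sinv_star q (ugen (Eg j)) = [(- complex_of_real q, [Fg j])]"
  by (simp add: sinv_star_def usinv_def ustar_def ugen_def)

lemma Mstar_0: "Mstar q 0 j = [(- complex_of_real q, [Fg j])]"
  by (simp add: Mstar_def sinv_star_Eg)

lemma Mstar_Suc:
  "Mstar q (Suc n) j = umul [(- complex_of_real q, [Fg j])] (Mstar q n (Suc j))
     @ uscale (- inverse (complex_of_real q)) (umul (Mstar q n (Suc j)) [(- complex_of_real q, [Fg j])])"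
  by (simp add: Mstar_def qcomm_def sinv_star_append sinv_star_uscale sinv_star_umul sinv_star_Eg)

lemma ract_Mstar_0: "ract f (Mstar q 0 j) = (\<lambda>w. - complex_of_real q * f (Fg j # w))"
  by (simp add: Mstar_0 ract_single ract_word_def)

lemma ract_Mstar_Suc:
  assumes "q \<noteq> 0"
  shows "ract f (Mstar q (Suc n) j)
       = (\<lambda>w. - complex_of_real q * ract (\<lambda>v. f (Fg j # v)) (Mstar q n (Suc j)) w
              + ract f (Mstar q n (Suc j)) (Fg j # w))"
  using assms by (simp add: Mstar_Suc ract_append ract_umul ract_uscale ract_single ract_uminus ract_scale
      ract_word_def mult.assoc[symmetric])

definition F_root_exp :: "nat \<Rightarrow> gen \<Rightarrow> word \<Rightarrow> real" where
  "F_root_exp l g u = (\<Sum>x\<leftarrow>u. case x of Fg p \<Rightarrow> root_exp l g p | _ \<Rightarrow> 0)"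

lemma F_root_exp_Km_far:
  "\<forall>x\<in>set u. \<exists>p. x = Fg p \<and> j + 2 \<le> p \<Longrightarrow> F_root_exp l (Km j) u = 0"
  by (induction u) (auto simp: F_root_exp_def root_exp_def)

lemma Mstar_word_shape:
  "(c, u) \<in> set (Mstar q n (Suc j)) \<Longrightarrow>
   (\<forall>x\<in>set u. \<exists>p. x = Fg p \<and> Suc j \<le> p \<and> p \<le> Suc j + n) \<and> F_root_exp l (Km j) u = - 1 / 2"
proof (induction n arbitrary: j c u)
  case 0
  then show ?case by (simp add: Mstar_0 F_root_exp_def root_exp_def)
next
  case (Suc n)
  obtain d v where v: "(d, v) \<in> set (Mstar q n (Suc (Suc j)))"
    and u: "u = Fg (Suc j) # v \<or> u = v @ [Fg (Suc j)]"
    using Suc.prems by (auto simp: Mstar_Suc umul_def uscale_def)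
  have v_letters: "\<forall>x\<in>set v. \<exists>p. x = Fg p \<and> Suc (Suc j) \<le> p \<and> p \<le> Suc (Suc j) + n"
    using Suc.IH v by blast
  then have "F_root_exp l (Km j) v = 0"
    by (intro F_root_exp_Km_far) fastforce
  then show ?case
    using u v_letters by (auto simp: F_root_exp_def root_exp_def) (metis Suc_leD)+
qed

lemma Aq_F_word_cartan_qcommute:
  assumes q: "0 < q" and f: "f \<in> Aq q l" and g: "cartan g"
  shows "\<forall>z\<in>set u. \<exists>p. z = Fg p \<and> 1 \<le> p \<and> p \<le> l \<Longrightarrow>
    f (x @ u @ g # y) = complex_of_real (q powr (- F_root_exp l g u)) * f (x @ g # u @ y)"
proof (induction u arbitrary: x)
  case Nil
  then show ?case using q by (simp add: F_root_exp_def)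
next
  case (Cons z u)
  obtain p where z: "z = Fg p" "1 \<le> p" "p \<le> l"
    using Cons.prems by auto
  have "f (x @ (z # u) @ g # y) = complex_of_real (q powr (- F_root_exp l g u)) * f ((x @ [Fg p]) @ g # u @ y)"
    using Cons.IH[of "x @ [Fg p]"] Cons.prems z by simp
  also have "f ((x @ [Fg p]) @ g # u @ y) = complex_of_real (q powr (- root_exp l g p)) * f (x @ g # Fg p # u @ y)"
    using Aq_cartan_F_qcommute[OF q f g z(2,3), of x "u @ y"] q by (simp add: powr_minus field_simps)
  moreover have "q powr (- F_root_exp l g (z # u)) = q powr (- F_root_exp l g u) * q powr (- root_exp l g p)"
    using z by (simp add: F_root_exp_def ac_simps flip: powr_add)
  ultimately show ?case
    using z by simp
qed

lemma Aq_cartan_word_F_qcommute: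
  assumes q: "0 < q" and f: "f \<in> Aq q l" and p: "1 \<le> p" "p \<le> l"
  shows "list_all cartan k \<Longrightarrow>
    f (x @ k @ Fg p # y) = complex_of_real (q powr (\<Sum>g\<leftarrow>k. root_exp l g p)) * f (x @ Fg p # k @ y)"
proof (induction k arbitrary: x)
  case Nil
  then show ?case using q by simp
next
  case (Cons g k)
  have "f (x @ (g # k) @ Fg p # y)
      = complex_of_real (q powr (\<Sum>g\<leftarrow>k. root_exp l g p)) * f (x @ g # Fg p # k @ y)"
    using Cons.IH[of "x @ [g]"] Cons.prems by simp
  also have "f (x @ g # Fg p # k @ y) = complex_of_real (q powr root_exp l g p) * f (x @ Fg p # g # k @ y)"
    using Aq_cartan_F_qcommute[OF q f _ p] Cons.prems by simp
  finally show ?case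
    by (simp add: powr_add)
qed

lemma ract_Mstar_Km:
  assumes q: "0 < q" and a: "a \<in> CP q l" and j: "1 \<le> j" "j < l" and n: "Suc j + n \<le> l"
  shows "ract a (Mstar q n (Suc j)) (Km j # w) = complex_of_real (q powr (1/2)) * ract a (Mstar q n (Suc j)) w"
proof -
  have "a (u @ Km j # w) = complex_of_real (q powr (1/2)) * a (u @ w)"
    if "(c, u) \<in> set (Mstar q n (Suc j))" for c u
  proof -
    have shape: "\<forall>z\<in>set u. \<exists>p. z = Fg p \<and> 1 \<le> p \<and> p \<le> l" "F_root_exp l (Km j) u = - 1 / 2"
      using Mstar_word_shape[OF that, of l] n by fastforce+
    have "a ([] @ u @ Km j # w) = complex_of_real (q powr (- F_root_exp l (Km j) u)) * a ([] @ Km j # u @ w)"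
      using Aq_F_word_cartan_qcommute[OF q CP_Aq[OF a] _ shape(1), of "Km j" "[]" w] by simp
    also have "a ([] @ Km j # u @ w) = a (u @ w)"
      using CP_K_cartan_fixed[OF a] j by simp
    finally show ?thesis
      using shape(2) by simp
  qed
  then have "(\<Sum>(c, u)\<leftarrow>Mstar q n (Suc j). c * a (u @ Km j # w))
      = (\<Sum>(c, u)\<leftarrow>Mstar q n (Suc j). complex_of_real (q powr (1/2)) * (c * a (u @ w)))"
    by (intro arg_cong[of _ _ sum_list] map_cong) auto
  then show ?thesis
    by (simp add: ract_def case_prod_unfold sum_list_const_mult)
qed

lemma Aq_Kps_F_qcommute:
  assumes q: "0 < q" and b: "b \<in> Aq q l" and j: "1 \<le> j" "j < l"
  shows "b (map Kp (rev [Suc j..<Suc l]) @ Fg j # w)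
       = complex_of_real (q powr (1/2)) * b (Fg j # map Kp (rev [Suc j..<Suc l]) @ w)"
proof -
  have "(\<Sum>g\<leftarrow>map Kp (rev [Suc j..<Suc l]). root_exp l g j) = (\<Sum>i\<in>{Suc j..<Suc l}. root_exp l (Kp i) j)"
    by (simp add: rev_map[symmetric] sum_list_rev sum_list_distinct_conv_sum_set o_def del: upt_Suc)
  also have "\<dots> = (\<Sum>i\<in>{Suc j..<Suc l}. if i = Suc j then 1/2 else 0)"
    by (intro sum.cong) (auto simp: root_exp_def)
  also have "\<dots> = 1/2"
    using j by simp
  finally have exp: "(\<Sum>g\<leftarrow>map Kp (rev [Suc j..<Suc l]). root_exp l g j) = 1/2" .
  have "list_all cartan (map Kp (rev [Suc j..<Suc l]))"
    by (simp add: list_all_iff)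
  from Aq_cartan_word_F_qcommute[OF q b j(1) less_imp_le[OF j(2)] this, of "[]" w] show ?thesis
    unfolding exp by simp
qed

section \<open>The twisted Leibniz rule\<close>

lemma CP_Fg_absorbed:
  assumes "0 < q" and "a \<in> CP q l" and "1 \<le> j" and "j < l"
  shows "(\<lambda>v. a (Fg j # v)) = (\<lambda>v. 0)" and "conv a g (Fg j # w) = conv a (\<lambda>v. g (Fg j # v)) w"
proof -
  show aF: "(\<lambda>v. a (Fg j # v)) = (\<lambda>v. 0)"
    using CP_Fg_zero[OF assms] by simp
  have "(\<lambda>v. a (Km j # v)) = a"
    using CP_K_cartan_fixed[OF assms(2)] assms(3,4) by simp
  then show "conv a g (Fg j # w) = conv a (\<lambda>v. g (Fg j # v)) w"
    by (simp add: conv_Fg aF conv_zero_left)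
qed

lemma ract_Mstar_conv_last:
  assumes "0 < q" and "1 \<le> l" and "a \<in> CP q l"
  shows "ract (conv a b) (Mstar q 0 l)
       = (\<lambda>w. conv a (ract b (Mstar q 0 l)) w + conv (ract a (Mstar q 0 l)) (\<lambda>v. b (Kp l # v)) w)"
proof -
  have "(\<lambda>v. a (Km l # v)) = a"
    using CP_Km_last[OF assms] by simp
  then show ?thesis
    by (simp add: ract_Mstar_0 conv_Fg conv_uminus_left conv_uminus_right conv_scale_left conv_scale_right
        algebra_simps)
qed

lemma ract_Mstar_conv_Suc:
  assumes q: "0 < q" and a: "a \<in> CP q l" and b: "b \<in> Aq q l" and j: "1 \<le> j" "Suc j + n = l"
    and IH: "\<And>b. b \<in> Aq q l \<Longrightarrow> ract (conv a b) (Mstar q n (Suc j))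
       = (\<lambda>w. conv a (ract b (Mstar q n (Suc j))) w
              + conv (ract a (Mstar q n (Suc j))) (ract_word b (map Kp (rev [Suc j..<Suc l]))) w)"
  shows "ract (conv a b) (Mstar q (Suc n) j)
       = (\<lambda>w. conv a (ract b (Mstar q (Suc n) j)) w
              + conv (ract a (Mstar q (Suc n) j)) (ract_word b (map Kp (rev [j..<Suc l]))) w)"
proof
  fix w
  define Z where "Z = Mstar q n (Suc j)"
  define k where "k = map Kp (rev [Suc j..<Suc l])"
  define bF where "bF = (\<lambda>v. b (Fg j # v))"
  define r where "r = complex_of_real (q powr (1/2))"
  have bF: "bF \<in> Aq q l"
    using Aq_ract_word[OF b, of "[Fg j]"] by (simp add: bF_def ract_word_def)
  have aF: "(\<lambda>v. a (Fg j # v)) = (\<lambda>v. 0)"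
    and convF: "conv a g (Fg j # v) = conv a (\<lambda>v. g (Fg j # v)) v" for g v
    using CP_Fg_absorbed[OF q a j(1)] j by auto
  have ZK: "(\<lambda>v. ract a Z (Km j # v)) = (\<lambda>v. r * ract a Z v)"
    using ract_Mstar_Km[OF q a j(1)] j by (simp add: Z_def r_def)
  have kF: "(\<lambda>v. ract_word b k (Fg j # v)) = (\<lambda>v. r * ract_word bF k v)"
    using Aq_Kps_F_qcommute[OF q b j(1)] j by (simp add: k_def bF_def r_def ract_word_def)
  have kK: "ract_word b (map Kp (rev [j..<Suc l])) = (\<lambda>v. ract_word b k (Kp j # v))"
    using j by (simp add: k_def ract_word_def upt_conv_Cons del: upt_Suc)
  have r2: "r * r = complex_of_real q"
    using q by (simp add: r_def flip: of_real_mult powr_add)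
  have Sa: "ract a (Mstar q (Suc n) j) = (\<lambda>v. ract a Z (Fg j # v))"
    using ract_Mstar_Suc[of q a n j] q by (simp add: aF ract_zero Z_def)
  have Sb: "ract b (Mstar q (Suc n) j) = (\<lambda>v. - complex_of_real q * ract bF Z v + ract b Z (Fg j # v))"
    using ract_Mstar_Suc[of q b n j] q by (simp add: Z_def bF_def)
  have "ract (conv a b) (Mstar q (Suc n) j) w
      = - complex_of_real q * ract (conv a bF) Z w + ract (conv a b) Z (Fg j # w)"
    using ract_Mstar_Suc[of q "conv a b" n j] q by (simp add: convF Z_def bF_def)
  also have "\<dots> = - complex_of_real q * (conv a (ract bF Z) w + conv (ract a Z) (ract_word bF k) w)
      + conv a (ract b Z) (Fg j # w) + conv (ract a Z) (ract_word b k) (Fg j # w)"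
    by (simp add: IH[OF bF] IH[OF b] Z_def k_def)
  also have "conv (ract a Z) (ract_word b k) (Fg j # w)
      = conv (\<lambda>v. ract a Z (Fg j # v)) (\<lambda>v. ract_word b k (Kp j # v)) w
        + complex_of_real q * conv (ract a Z) (ract_word bF k) w"
    by (simp add: conv_Fg ZK kF conv_scale_left conv_scale_right r2 mult.assoc[symmetric])
  also have "conv a (ract b Z) (Fg j # w) = conv a (\<lambda>v. ract b Z (Fg j # v)) w"
    by (rule convF)
  finally show "ract (conv a b) (Mstar q (Suc n) j) w
      = conv a (ract b (Mstar q (Suc n) j)) w
        + conv (ract a (Mstar q (Suc n) j)) (ract_word b (map Kp (rev [j..<Suc l]))) w"
    unfolding Sa Sb kK conv_add_right conv_scale_right by (simp add: algebra_simps)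
qed

lemma ract_Mstar_conv:
  assumes "0 < q" and "1 \<le> l" and "a \<in> CP q l"
  shows "b \<in> Aq q l \<Longrightarrow> 1 \<le> j \<Longrightarrow> j + n = l \<Longrightarrow>
    ract (conv a b) (Mstar q n j)
    = (\<lambda>w. conv a (ract b (Mstar q n j)) w + conv (ract a (Mstar q n j)) (ract_word b (map Kp (rev [j..<Suc l]))) w)"
proof (induction n arbitrary: j b)
  case 0
  then show ?case
    using ract_Mstar_conv_last[OF assms] by (simp add: ract_word_def)
next
  case (Suc n)
  then show ?case
    by (intro ract_Mstar_conv_Suc[OF assms(1,3)]) simp_all
qed

section \<open>The derivation property of \<open>dbar\<close>\<close>

lemma ract_usinv:
  "ract f (usinv q x) = (\<lambda>w. \<Sum>(c, u)\<leftarrow>x. c * fst (sinv_word q u) * f (snd (sinv_word q u) @ w))"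
  by (simp add: ract_def usinv_def case_prod_unfold o_def)

lemma ract_usinv_umul: "ract f (usinv q (umul x y)) = ract (ract f (usinv q y)) (usinv q x)"
proof
  fix w
  have "ract f (usinv q (umul x y)) w = (\<Sum>(c, u)\<leftarrow>x. \<Sum>(d, v)\<leftarrow>y.
      c * d * fst (sinv_word q (u @ v)) * f (snd (sinv_word q (u @ v)) @ w))"
    unfolding ract_usinv by (simp add: sum_umul)
  also have "\<dots> = ract (ract f (usinv q y)) (usinv q x) w"
    unfolding ract_usinv by (simp add: sinv_word_append case_prod_unfold mult_ac flip: sum_list_const_mult)
  finally show "ract f (usinv q (umul x y)) w = ract (ract f (usinv q y)) (usinv q x) w" .
qed

lemma sinv_word_Kps: "sinv_word q (map Kp xs) = (1, rev (map Km xs))"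
  by (induction xs) (auto simp: Let_def)

text \<open>\<open>S\<^sup>-\<^sup>1(K\<^sup>^ N\<^sub>x\<^sub>l M\<^sub>x\<^sub>l\<^sup>*) = S\<^sup>-\<^sup>1(M\<^sub>x\<^sub>l\<^sup>*) S\<^sup>-\<^sup>1(N\<^sub>x\<^sub>l) S\<^sup>-\<^sup>1(K\<^sup>^)\<close>, and the last two factors are grouplike.\<close>

lemma ract_hatK_X:
  "ract f (usinv q (umul (ugen Kh) (Xop q l x)))
   = ract_word (ract f (Mstar q (l - x) x)) (Kh # rev (map Km [x..<Suc l]) @ [Khm])"
proof -
  have "sinv_word q (map Kp [x..<Suc l] @ [Khm]) = (1, Kh # rev (map Km [x..<Suc l]))"
    by (simp add: sinv_word_append sinv_word_Kps del: upt_Suc)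
  then show ?thesis
    unfolding Xop_def ract_usinv_umul Mstar_def sinv_star_def Mil_def
    by (simp add: Nop_def ugen_def usinv_def ract_single ract_word_def del: upt_Suc)
qed

lemma word_exp_rev [simp]: "word_exp l (rev w) j = word_exp l w j"
  by (simp add: word_exp_def rev_map[symmetric] sum_list_rev)

lemma word_exp_Kps_Kms: "word_exp l (map Kp xs) j + word_exp l (map Km xs) j = 0"
  by (induction xs) auto

lemma ract_hatK_X_conv:
  assumes q: "0 < q" and x: "1 \<le> x" "x \<le> l" and a: "a \<in> CP q l" and b: "b \<in> Aq q l"
  shows "ract (conv a b) (usinv q (umul (ugen Kh) (Xop q l x)))
       = (\<lambda>w. conv a (ract b (usinv q (umul (ugen Kh) (Xop q l x)))) w
              + conv (ract a (usinv q (umul (ugen Kh) (Xop q l x)))) b w)"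
proof -
  define xs where "xs = [x..<Suc l]"
  define G where "G = Kh # rev (map Km xs) @ [Khm]"
  define k where "k = map Kp (rev xs)"
  have G: "list_all cartan G"
    by (simp add: G_def list_all_iff)
  have conv_G: "conv f g (G @ w) = conv (\<lambda>v. f (G @ v)) (\<lambda>v. g (G @ v)) w" for f g w
    using fun_cong[OF ract_word_conv[of f g G], of w] by (simp add: ract_word_def coprod_cartan[OF G])
  have "a (G @ w) = a w" for w
  proof (rule fixed_letters_append)
    fix g v assume "g \<in> set G"
    moreover have "set xs = {x..<Suc l}"
      by (simp add: xs_def del: upt_Suc)
    ultimately have "cartan g" "isK l g \<or> g = Kp l \<or> g = Km l"
      using x by (auto simp: G_def less_Suc_eq)
    then show "a (g # v) = a v"
      using CP_cartan_fixed[OF q _ a] x by simp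
  qed
  then have aG: "(\<lambda>v. a (G @ v)) = a"
    by simp
  have "b ([] @ (k @ G) @ w) = b ([] @ [] @ w)" for w
    using G word_exp_Kps_Kms[of l xs]
    by (intro Aq_cartan_weight_invariant[OF q b]) (auto simp: k_def G_def list_all_iff rev_map[symmetric])
  then have bG: "(\<lambda>v. b (k @ G @ v)) = b"
    by simp
  have "ract (conv a b) (Mstar q (l - x) x)
      = (\<lambda>w. conv a (ract b (Mstar q (l - x) x)) w + conv (ract a (Mstar q (l - x) x)) (ract_word b k) w)"
    using ract_Mstar_conv[OF q _ a b x(1)] x by (simp add: k_def xs_def)
  then show ?thesis
    unfolding ract_hatK_X xs_def[symmetric] G_def[symmetric] ract_word_def
    by (simp add: conv_G aG bG)
qed

lemma dbar_conv_CP: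
  assumes q: "0 < q" and a: "a \<in> CP q l" and I: "I \<subseteq> {1..l}"
    and \<omega>: "\<And>x. x \<in> I \<Longrightarrow> \<omega> (I - {x}) \<in> Aq q l"
  shows "dbar q l (\<lambda>J. conv a (\<omega> J)) I = (\<lambda>w. conv a (dbar q l \<omega> I) w + qwedge q (dbar0 q l a) \<omega> I w)"
proof
  fix w
  define Y where "Y x = usinv q (umul (ugen Kh) (Xop q l x))" for x
  have "ract (conv a (\<omega> (I - {x}))) (Y x) w
      = conv a (ract (\<omega> (I - {x})) (Y x)) w + conv (ract a (Y x)) (\<omega> (I - {x})) w" if "x \<in> I" for x
    using ract_hatK_X_conv[OF q _ _ a \<omega>[OF that]] that I unfolding Y_def by auto
  then have "dbar q l (\<lambda>J. conv a (\<omega> J)) I w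
      = (\<Sum>x\<in>I. qsign q I x * conv a (ract (\<omega> (I - {x})) (Y x)) w)
        + (\<Sum>x\<in>I. qsign q I x * conv (ract a (Y x)) (\<omega> (I - {x})) w)"
    unfolding dbar_def Y_def[symmetric] by (simp add: distrib_left sum.distrib)
  then show "dbar q l (\<lambda>J. conv a (\<omega> J)) I w = conv a (dbar q l \<omega> I) w + qwedge q (dbar0 q l a) \<omega> I w"
    unfolding dbar_def qwedge_def dbar0_def Y_def[symmetric] by (simp add: conv_sum_right conv_scale_right)
qed

theorem lemma5p7:
  fixes q :: real and l k :: nat and N :: int
    and a :: functional and \<omega> :: "nat set \<Rightarrow> functional"
  assumes "0 < q" and "q < 1" and "2 \<le> l" and "k \<le> l"
    and "a \<in> CP q l" and "\<omega> \<in> Omega q l N k"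
  shows "\<forall>I \<in> Lam l (k + 1).
           dbar q l (\<lambda>J. conv a (\<omega> J)) I
         = (\<lambda>w. conv a (dbar q l \<omega> I) w + qwedge q (dbar0 q l a) \<omega> I w)"
proof
  fix I assume "I \<in> Lam l (k + 1)"
  then have I: "I \<subseteq> {1..l}" "card I = k + 1"
    by (auto simp: Lam_def)
  have "I - {x} \<in> Lam l k" if "x \<in> I" for x
    using I that finite_subset[OF I(1)] by (simp add: Lam_def card_Diff_singleton subset_iff)
  then have "\<omega> (I - {x}) \<in> Aq q l" if "x \<in> I" for x
    using assms(6) that unfolding Omega_def by blast
  then show "dbar q l (\<lambda>J. conv a (\<omega> J)) I = (\<lambda>w. conv a (dbar q l \<omega> I) w + qwedge q (dbar0 q l a) \<omega> I w)"
    using dbar_conv_CP[OF assms(1,5) I(1)] by blast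
qed

end
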